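(* Let $A$ be a uniform Kan complex, $\pi:B\to A^{\mathrm{I}}$ a uniform Kan fibration, and $b:A\to B$ a map with $\pi\circ b=r$, where $r:A\to A^{\mathrm{I}}$ is the constant-path map. Then there is a map $j:A^{\mathrm{I}}\to B$ with $\pi\circ j=1_{A^{\mathrm{I}}}$.
   Context: Let $\mathbb{B}$ be the category of finite sets $[n]=\{\bot,x_1,\dots,x_n,\top\}$ ($n\ge0$, $\bot\ne\top$) and functions preserving $\bot,\top$; cartesian cubical sets are presheaves on $\mathbb{B}^{op}$. $\mathrm{I}^n$ is the representable on $[n]$, $\mathrm{I}^n\cong\mathrm{I}\times\dots\times\mathrm{I}$, $\mathrm{I}=\mathrm{I}^1$, $\mathrm{I}^0=1$; the two maps $[1]\to[0]$ give endpoints $0,1:1\to\mathrm{I}$. $A^{\mathrm{I}}$ is the exponential and $r:A\to A^{\mathrm{I}}$ is induced by $\mathrm{I}\to1$. For $1\le i\le n$, $d\in\{0,1\}$, the face $\alpha_i^d:\mathrm{I}^{n-1}\to\mathrm{I}^n$ inserts $d$ in coordinate $i$; for $e\in\{0,1\}$ the open box $\sqcup^n_e\rightarrowtail\mathrm{I}^n$ is the union of the images of all faces $\alpha_i^d$ with $(i,d)\ne(1,e)$, with inclusion $i^n_e$. A uniform Kan fibration structure on $f:Y\to X$ consists of, for each $n\ge1$, $e\in\{0,1\}$, $k\ge1$ and each commutative square $b':\mathrm{I}^k\times\sqcup^n_e\to Y$, $a:\mathrm{I}^k\times\mathrm{I}^n\to X$ with $fb'=a(1\times i^n_e)$, a chosen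 filler $\phi(a,b'):\mathrm{I}^k\times\mathrm{I}^n\to Y$ with $\phi(a,b')(1\times i^n_e)=b'$ and $f\phi(a,b')=a$, such that $\phi(a,b')\circ(\alpha\times1)=\phi(a(\alpha\times1),b'(\alpha\times1))$ for all $\alpha:\mathrm{I}^j\to\mathrm{I}^k$ ($j\ge1$). A uniform Kan complex is a cubical set $A$ with a uniform Kan fibration structure on $A\to1$. *)

theory Defs
  imports Main
begin

text \<open>Elements of [n] = {bot, x_1, ..., x_n, top}: Bot, Top, and Var i for 0 <= i < n
  (Var i stands for x_(i+1)).\<close>
datatype pt = Bot | Top | Var nat

definition pts :: "nat \<Rightarrow> pt set" where
  "pts n = {Bot, Top} \<union> Var ` {..<n}"

text \<open>A morphism [m] -> [n] of B preserving bot and top is determined by the images of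
  x_1..x_m; it is stored as a function nat => pt (value at index i = image of x_(i+1)),
  canonically Bot at indices >= m.\<close>
definition hom :: "nat \<Rightarrow> nat \<Rightarrow> (nat \<Rightarrow> pt) set" where
  "hom m n = {f. (\<forall>i<m. f i \<in> pts n) \<and> (\<forall>i\<ge>m. f i = Bot)}"

fun ext :: "(nat \<Rightarrow> pt) \<Rightarrow> pt \<Rightarrow> pt" where
  "ext g Bot = Bot" | "ext g Top = Top" | "ext g (Var j) = g j"

definition bcomp :: "(nat \<Rightarrow> pt) \<Rightarrow> (nat \<Rightarrow> pt) \<Rightarrow> (nat \<Rightarrow> pt)" where
  "bcomp g f = ext g \<circ> f"

definition bid :: "nat \<Rightarrow> (nat \<Rightarrow> pt)" where
  "bid n = (\<lambda>i. if i < n then Var i else Bot)"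

section \<open>Cartesian cubical sets (functors B -> Set, i.e. presheaves on B^op)\<close>

text \<open>act X m n f x : the action X(f) : X(m) -> X(n) of f \<in> hom m n.\<close>
record 'a cset =
  carrier :: "nat \<Rightarrow> 'a set"
  act :: "nat \<Rightarrow> nat \<Rightarrow> (nat \<Rightarrow> pt) \<Rightarrow> 'a \<Rightarrow> 'a"

definition is_cset :: "'a cset \<Rightarrow> bool" where
  "is_cset X \<longleftrightarrow>
     (\<forall>m n f x. f \<in> hom m n \<longrightarrow> x \<in> carrier X m \<longrightarrow> act X m n f x \<in> carrier X n) \<and>
     (\<forall>m x. x \<in> carrier X m \<longrightarrow> act X m m (bid m) x = x) \<and>
     (\<forall>m n p f g x. f \<in> hom m n \<longrightarrow> g \<in> hom n p \<longrightarrow> x \<in> carrier X m \<longrightarrow>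
        act X n p g (act X m n f x) = act X m p (bcomp g f) x)"

text \<open>Morphisms (natural transformations), represented extensionally
  (value undefined outside the carrier).\<close>
definition morphism :: "'a cset \<Rightarrow> 'b cset \<Rightarrow> (nat \<Rightarrow> 'a \<Rightarrow> 'b) \<Rightarrow> bool" where
  "morphism X Y h \<longleftrightarrow>
     (\<forall>m x. x \<in> carrier X m \<longrightarrow> h m x \<in> carrier Y m) \<and>
     (\<forall>m n f x. f \<in> hom m n \<longrightarrow> x \<in> carrier X m \<longrightarrow> h n (act X m n f x) = act Y m n f (h m x)) \<and>
     (\<forall>m x. x \<notin> carrier X m \<longrightarrow> h m x = undefined)"

definition mid :: "'a cset \<Rightarrow> (nat \<Rightarrow> 'a \<Rightarrow> 'a)" where
  "mid X = (\<lambda>m x. if x \<in> carrier X m then x else undefined)"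

definition mcomp :: "'a cset \<Rightarrow> (nat \<Rightarrow> 'b \<Rightarrow> 'c) \<Rightarrow> (nat \<Rightarrow> 'a \<Rightarrow> 'b) \<Rightarrow> (nat \<Rightarrow> 'a \<Rightarrow> 'c)" where
  "mcomp X g h = (\<lambda>m x. if x \<in> carrier X m then g m (h m x) else undefined)"

definition terminal :: "unit cset" where
  "terminal = \<lparr>carrier = (\<lambda>m. {()}), act = (\<lambda>m n f x. ())\<rparr>"

definition to_terminal :: "'a cset \<Rightarrow> (nat \<Rightarrow> 'a \<Rightarrow> unit)" where
  "to_terminal X = (\<lambda>m x. if x \<in> carrier X m then () else undefined)"

definition cprod :: "'a cset \<Rightarrow> 'b cset \<Rightarrow> ('a \<times> 'b) cset" where
  "cprod X Y = \<lparr>carrier = (\<lambda>m. carrier X m \<times> carrier Y m),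
                act = (\<lambda>m n f p. (act X m n f (fst p), act Y m n f (snd p)))\<rparr>"

definition mprod :: "'a cset \<Rightarrow> 'b cset \<Rightarrow> (nat \<Rightarrow> 'a \<Rightarrow> 'c) \<Rightarrow> (nat \<Rightarrow> 'b \<Rightarrow> 'd)
    \<Rightarrow> (nat \<Rightarrow> 'a \<times> 'b \<Rightarrow> 'c \<times> 'd)" where
  "mprod X1 X2 h1 h2 = (\<lambda>m p. if p \<in> carrier X1 m \<times> carrier X2 m
                                then (h1 m (fst p), h2 m (snd p)) else undefined)"

definition sub :: "'a cset \<Rightarrow> (nat \<Rightarrow> 'a set) \<Rightarrow> 'a cset" where
  "sub X S = X\<lparr>carrier := S\<rparr>"

text \<open>The representable I^n on [n]: I^n(m) = hom n m.\<close>
definition cube :: "nat \<Rightarrow> (nat \<Rightarrow> pt) cset" where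
  "cube n = \<lparr>carrier = (\<lambda>m. hom n m), act = (\<lambda>m p g h. bcomp g h)\<rparr>"

text \<open>Yoneda image of g \<in> hom n m: the map I^m -> I^n.\<close>
definition ymap :: "nat \<Rightarrow> (nat \<Rightarrow> pt) \<Rightarrow> (nat \<Rightarrow> (nat \<Rightarrow> pt) \<Rightarrow> (nat \<Rightarrow> pt))" where
  "ymap m g = (\<lambda>p h. if h \<in> hom m p then bcomp h g else undefined)"

text \<open>The face alpha_i^d : I^(n-1) -> I^n (1 <= i <= n) is the Yoneda image of the
  B-morphism [n] -> [n-1] sending x_i to d (d = False: bot, i.e. endpoint 0;
  d = True: top, endpoint 1) and the other variables in order to x_1..x_(n-1).\<close>
definition face :: "nat \<Rightarrow> nat \<Rightarrow> bool \<Rightarrow> (nat \<Rightarrow> pt)" where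
  "face n i d = (\<lambda>j. if j < i - 1 then Var j
                     else if j = i - 1 then (if d then Top else Bot)
                     else if j < n then Var (j - 1) else Bot)"

definition obox_carrier :: "nat \<Rightarrow> bool \<Rightarrow> nat \<Rightarrow> (nat \<Rightarrow> pt) set" where
  "obox_carrier n e m = {h. \<exists>i d. 1 \<le> i \<and> i \<le> n \<and> (i, d) \<noteq> (1, e) \<and>
                              h \<in> ymap (n - 1) (face n i d) m ` hom (n - 1) m}"

definition obox :: "nat \<Rightarrow> bool \<Rightarrow> (nat \<Rightarrow> pt) cset" where
  "obox n e = sub (cube n) (obox_carrier n e)"

type_synonym 'a path = "nat \<Rightarrow> (nat \<Rightarrow> pt) \<times> (nat \<Rightarrow> pt) \<Rightarrow> 'a"

text \<open>Exponential A^I: (A^I)(n) = maps I^n x I -> A, acting by precomposition with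
  y(g) x 1.\<close>
definition expI :: "'a cset \<Rightarrow> 'a path cset" where
  "expI A = \<lparr>carrier = (\<lambda>n. {\<phi>. morphism (cprod (cube n) (cube 1)) A \<phi>}),
             act = (\<lambda>n m g \<phi>. mcomp (cprod (cube m) (cube 1)) \<phi>
                                 (mprod (cube m) (cube 1) (ymap m g) (mid (cube 1))))\<rparr>"

text \<open>r : A -> A^I induced by I -> 1: a \<in> A(n) goes to I^n x I -> I^n -> A.\<close>
definition constpath :: "'a cset \<Rightarrow> (nat \<Rightarrow> 'a \<Rightarrow> 'a path)" where
  "constpath A = (\<lambda>n a. if a \<in> carrier A n then
       (\<lambda>p ht. if ht \<in> hom n p \<times> hom 1 p then act A n p (fst ht) a else undefined)
     else undefined)"

definition boxdom :: "nat \<Rightarrow> nat \<Rightarrow> bool \<Rightarrow> ((nat \<Rightarrow> pt) \<times> (nat \<Rightarrow> pt)) cset" where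
  "boxdom k n e = cprod (cube k) (obox n e)"

definition cubedom :: "nat \<Rightarrow> nat \<Rightarrow> ((nat \<Rightarrow> pt) \<times> (nat \<Rightarrow> pt)) cset" where
  "cubedom k n = cprod (cube k) (cube n)"

text \<open>phi n e k a b' is the chosen filler.\<close>
definition ukf_structure :: "'x cset \<Rightarrow> 'y cset \<Rightarrow> (nat \<Rightarrow> 'y \<Rightarrow> 'x)
   \<Rightarrow> (nat \<Rightarrow> bool \<Rightarrow> nat \<Rightarrow> (nat \<Rightarrow> (nat \<Rightarrow> pt) \<times> (nat \<Rightarrow> pt) \<Rightarrow> 'x)
        \<Rightarrow> (nat \<Rightarrow> (nat \<Rightarrow> pt) \<times> (nat \<Rightarrow> pt) \<Rightarrow> 'y)
        \<Rightarrow> (nat \<Rightarrow> (nat \<Rightarrow> pt) \<times> (nat \<Rightarrow> pt) \<Rightarrow> 'y)) \<Rightarrow> bool" where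
  "ukf_structure X Y f \<phi> \<longleftrightarrow>
    (\<forall>n e k a b'. 1 \<le> n \<longrightarrow> 1 \<le> k \<longrightarrow>
       morphism (cubedom k n) X a \<longrightarrow> morphism (boxdom k n e) Y b' \<longrightarrow>
       mcomp (boxdom k n e) f b' = mcomp (boxdom k n e) a (mid (boxdom k n e)) \<longrightarrow>
         morphism (cubedom k n) Y (\<phi> n e k a b') \<and>
         mcomp (boxdom k n e) (\<phi> n e k a b') (mid (boxdom k n e)) = b' \<and>
         mcomp (cubedom k n) f (\<phi> n e k a b') = a \<and>
         (\<forall>j \<alpha>. 1 \<le> j \<longrightarrow> morphism (cube j) (cube k) \<alpha> \<longrightarrow>
            mcomp (cubedom j n) (\<phi> n e k a b') (mprod (cube j) (cube n) \<alpha> (mid (cube n)))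
            = \<phi> n e j (mcomp (cubedom j n) a (mprod (cube j) (cube n) \<alpha> (mid (cube n))))
                       (mcomp (boxdom j n e) b' (mprod (cube j) (obox n e) \<alpha> (mid (obox n e))))))"

definition uniform_kan_fibration :: "'x cset \<Rightarrow> 'y cset \<Rightarrow> (nat \<Rightarrow> 'y \<Rightarrow> 'x) \<Rightarrow> bool" where
  "uniform_kan_fibration X Y f \<longleftrightarrow> morphism Y X f \<and> (\<exists>\<phi>. ukf_structure X Y f \<phi>)"

definition uniform_kan_complex :: "'a cset \<Rightarrow> bool" where
  "uniform_kan_complex A \<longleftrightarrow> uniform_kan_fibration terminal A (to_terminal A)"

end

theory Submission
  imports Defs
begin

text \<open>A path \<open>\<gamma>\<close> in \<open>A\<close> (over \<open>I\<^sup>k\<close>) is contracted to its start point: filling in \<open>A\<close> the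
  open box \<open>\<sqcup>\<^sup>2\<^sub>1\<close> that carries \<open>\<gamma>\<close> on the face \<open>s = 1\<close> and is constant at \<open>\<gamma>(0)\<close> on the
  faces \<open>t = 0\<close> and \<open>s = 0\<close> gives a square which, read as a path in \<open>A\<^sup>I\<close> in the variable \<open>s\<close>,
  runs from the constant path \<open>r(\<gamma>(0))\<close> to \<open>\<gamma>\<close>. As \<open>\<pi> b = r\<close>, the point \<open>b(\<gamma>(0))\<close> lies over
  the start of this path, and lifting the path along \<open>\<pi>\<close> gives a point of \<open>B\<close> over \<open>\<gamma>\<close>.
  Uniformity of the two filler structures makes the construction natural in \<open>\<gamma>\<close>, so it is a
  section of \<open>\<pi>\<close>.\<close>

text \<open>Keeping \<open>1\<close> rather than \<open>Suc 0\<close> lets the facts about \<open>hom 1 m\<close> act as simp rules.\<close>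
declare One_nat_def [simp del]

lemma ext_in_pts: "x \<in> pts n \<Longrightarrow> g \<in> hom n m \<Longrightarrow> ext g x \<in> pts m"
  unfolding pts_def hom_def by (cases x) auto

lemma bcomp_hom: "f \<in> hom k n \<Longrightarrow> g \<in> hom n m \<Longrightarrow> bcomp g f \<in> hom k m"
  unfolding bcomp_def by (auto simp: hom_def intro!: ext_in_pts[unfolded hom_def])

lemma bcomp_assoc: "bcomp h (bcomp g f) = bcomp (bcomp h g) f"
proof
  fix i show "bcomp h (bcomp g f) i = bcomp (bcomp h g) f i"
    by (cases "f i") (simp_all add: bcomp_def)
qed

lemma bcomp_bid_right: "g \<in> hom n m \<Longrightarrow> bcomp g (bid n) = g"
  unfolding bcomp_def bid_def hom_def by (rule ext) auto

lemma bcomp_bid_left: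
  assumes "g \<in> hom n m" shows "bcomp (bid m) g = g"
proof
  fix i show "bcomp (bid m) g i = g i"
    using assms by (cases "i < n"; cases "g i") (auto simp: bcomp_def bid_def hom_def pts_def)
qed

lemma bid_hom_le: "n \<le> m \<Longrightarrow> bid n \<in> hom n m"
  and bid_hom_Suc: "bid n \<in> hom (Suc n) n"
  unfolding bid_def hom_def pts_def by auto

definition hom_extend :: "nat \<Rightarrow> nat \<Rightarrow> (nat \<Rightarrow> pt) \<Rightarrow> (nat \<Rightarrow> pt)" where
  "hom_extend n m g = (\<lambda>i. if i < n then g i else if i = n then Var m else Bot)"

lemma hom_extend_hom: "g \<in> hom n m \<Longrightarrow> hom_extend n m g \<in> hom (Suc n) (Suc m)"
  unfolding hom_extend_def hom_def pts_def by (auto; fastforce)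

lemma bcomp_hom_extend_bid: "g \<in> hom n m \<Longrightarrow> bcomp (hom_extend n m g) (bid n) = g"
  unfolding hom_extend_def bid_def bcomp_def hom_def by (rule ext) auto

lemma bcomp_bid_hom_extend:
  assumes "g \<in> hom n m" shows "bcomp (bid m) (hom_extend n m g) = g"
proof
  fix i show "bcomp (bid m) (hom_extend n m g) i = g i"
    using assms by (cases "i < n"; cases "g i") (auto simp: hom_extend_def bcomp_def bid_def hom_def pts_def)
qed

definition end0 :: "nat \<Rightarrow> pt" where
  "end0 = (\<lambda>i. Bot)"

definition end1 :: "nat \<Rightarrow> pt" where
  "end1 = (\<lambda>i. if i = 0 then Top else Bot)"

definition cube_pair :: "(nat \<Rightarrow> pt) \<Rightarrow> (nat \<Rightarrow> pt) \<Rightarrow> (nat \<Rightarrow> pt)" where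
  "cube_pair t s = (\<lambda>i. if i = 0 then t 0 else if i = 1 then s 0 else Bot)"

definition cube_fst :: "(nat \<Rightarrow> pt) \<Rightarrow> (nat \<Rightarrow> pt)" where
  "cube_fst h = (\<lambda>i. if i = 0 then h 0 else Bot)"

lemma end0_hom [simp]: "end0 \<in> hom n m"
  and end1_hom [simp]: "end1 \<in> hom 1 m"
  unfolding end0_def end1_def hom_def pts_def by auto

lemma bcomp_end0 [simp]: "bcomp g end0 = end0"
  and bcomp_end1 [simp]: "bcomp g end1 = end1"
  unfolding end0_def end1_def bcomp_def by auto

lemma hom_0: "hom 0 m = {end0}"
  unfolding hom_def end0_def by auto

lemma cube_pair_hom: "t \<in> hom 1 m \<Longrightarrow> s \<in> hom 1 m \<Longrightarrow> cube_pair t s \<in> hom 2 m"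
  unfolding cube_pair_def hom_def by auto

lemma bcomp_cube_pair: "bcomp g (cube_pair t s) = cube_pair (bcomp g t) (bcomp g s)"
  unfolding cube_pair_def bcomp_def by auto

lemma cube_fst_hom: "h \<in> hom 2 m \<Longrightarrow> cube_fst h \<in> hom 1 m"
  unfolding hom_def cube_fst_def by auto

lemma bcomp_cube_fst: "bcomp g (cube_fst h) = cube_fst (bcomp g h)"
  unfolding bcomp_def cube_fst_def by auto

lemma cube_fst_cube_pair: "t \<in> hom 1 m \<Longrightarrow> cube_fst (cube_pair t s) = t"
  unfolding hom_def cube_fst_def cube_pair_def by auto

lemma cube_fst_eq_end0: "h 0 = Bot \<Longrightarrow> cube_fst h = end0"
  unfolding cube_fst_def end0_def by auto

lemma carrier_cube [simp]: "carrier (cube n) m = hom n m"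
  and act_cube [simp]: "act (cube n) m p g h = bcomp g h"
  by (simp_all add: cube_def)

lemma carrier_cprod [simp]: "carrier (cprod X Y) m = carrier X m \<times> carrier Y m"
  and act_cprod [simp]: "act (cprod X Y) m p g x = (act X m p g (fst x), act Y m p g (snd x))"
  by (simp_all add: cprod_def)

lemma carrier_obox [simp]: "carrier (obox n e) m = obox_carrier n e m"
  and act_obox [simp]: "act (obox n e) m p g h = bcomp g h"
  by (simp_all add: obox_def sub_def cube_def)

lemma carrier_cubedom [simp]: "carrier (cubedom k n) m = hom k m \<times> hom n m"
  and act_cubedom [simp]: "act (cubedom k n) m p g x = (bcomp g (fst x), bcomp g (snd x))"
  by (simp_all add: cubedom_def)

lemma carrier_boxdom [simp]: "carrier (boxdom k n e) m = hom k m \<times> obox_carrier n e m"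
  and act_boxdom [simp]: "act (boxdom k n e) m p g x = (bcomp g (fst x), bcomp g (snd x))"
  by (simp_all add: boxdom_def)

section \<open>Open boxes\<close>

lemma face_hom: "1 \<le> i \<Longrightarrow> i \<le> n \<Longrightarrow> face n i d \<in> hom n (n - 1)"
  unfolding face_def hom_def pts_def by auto

lemma obox_carrierE:
  assumes "h \<in> obox_carrier n e m"
  obtains i d h' where "1 \<le> i" "i \<le> n" "(i, d) \<noteq> (1, e)" "h' \<in> hom (n - 1) m"
    "h = bcomp h' (face n i d)"
  using assms unfolding obox_carrier_def ymap_def by auto

lemma obox_carrier_subset: "obox_carrier n e m \<subseteq> hom n m"
  by (auto elim!: obox_carrierE intro: bcomp_hom face_hom)

lemma obox_closed:
  assumes h: "h \<in> obox_carrier n e m" and g: "g \<in> hom m p"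
  shows "bcomp g h \<in> obox_carrier n e p"
  using h
proof (rule obox_carrierE)
  fix i d h' assume *: "1 \<le> i" "i \<le> n" "(i, d) \<noteq> (1, e)" "h' \<in> hom (n - 1) m"
    and "h = bcomp h' (face n i d)"
  then have "bcomp g h = ymap (n - 1) (face n i d) p (bcomp g h')"
    using bcomp_hom[OF _ g] by (simp add: ymap_def bcomp_assoc)
  then show ?thesis
    using * bcomp_hom[OF _ g] unfolding obox_carrier_def by blast
qed

lemma obox_carrier_1: "obox_carrier 1 True m = {end0}"
proof (intro set_eqI iffI)
  have face: "face 1 1 False = end0"
    unfolding face_def end0_def by auto
  fix h
  show "h \<in> {end0}" if "h \<in> obox_carrier 1 True m"
    using that
  proof (rule obox_carrierE)
    fix i d h' assume "1 \<le> i" "i \<le> 1" "(i, d) \<noteq> (1, True)" "h' \<in> hom (1 - 1) m"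
      and "h = bcomp h' (face 1 i d)"
    then show ?thesis using face by (simp add: hom_0)
  qed
  show "h \<in> obox_carrier 1 True m" if "h \<in> {end0}"
  proof -
    have "h = ymap (1 - 1) (face 1 1 False) m end0"
      using that face by (simp add: ymap_def)
    then show ?thesis
      unfolding obox_carrier_def by (intro CollectI exI[of _ 1] exI[of _ False]) simp
  qed
qed

lemma obox_carrier_2:
  "h \<in> obox_carrier 2 True m \<longleftrightarrow> h \<in> hom 2 m \<and> (h 0 = Bot \<or> h 1 = Bot \<or> h 1 = Top)"
proof
  assume box: "h \<in> obox_carrier 2 True m"
  then have "h 0 = Bot \<or> h 1 = Bot \<or> h 1 = Top"
  proof (rule obox_carrierE)
    fix i d h' assume i: "1 \<le> i" "i \<le> 2" "(i, d) \<noteq> (1, True)"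
      and h: "h = bcomp h' (face 2 i d)"
    then consider "i = 1" "d = False" | "i = 2" by fastforce
    then show ?thesis
      by cases (auto simp: h face_def bcomp_def)
  qed
  with box show "h \<in> hom 2 m \<and> (h 0 = Bot \<or> h 1 = Bot \<or> h 1 = Top)"
    using obox_carrier_subset by blast
next
  assume h: "h \<in> hom 2 m \<and> (h 0 = Bot \<or> h 1 = Bot \<or> h 1 = Top)"
  define h1 where "h1 = (\<lambda>i::nat. if i = 0 then h 1 else Bot)"
  have coord: "cube_fst h \<in> hom 1 m" "h1 \<in> hom 1 m"
    using h unfolding hom_def cube_fst_def h1_def by auto
  have high: "h i = Bot" if "i \<ge> 2" for i
    using h that unfolding hom_def by auto
  show "h \<in> obox_carrier 2 True m"
  proof (cases "h 0 = Bot")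
    case True
    then have "h = ymap (2 - 1) (face 2 1 False) m h1"
      using coord high unfolding ymap_def face_def bcomp_def h1_def
      by (intro ext) (auto simp: numeral_2_eq_2 less_Suc_eq One_nat_def)
    then show ?thesis
      using coord unfolding obox_carrier_def by (intro CollectI exI[of _ 1] exI[of _ False]) (simp add: One_nat_def)
  next
    case False
    then obtain d where "h 1 = (if d then Top else Bot)"
      using h by metis
    then have "h = ymap (2 - 1) (face 2 2 d) m (cube_fst h)"
      using coord high unfolding ymap_def face_def bcomp_def cube_fst_def
      by (intro ext) (auto simp: numeral_2_eq_2 less_Suc_eq One_nat_def)
    then show ?thesis
      using coord unfolding obox_carrier_def by (intro CollectI exI[of _ 2] exI[of _ d]) (simp add: One_nat_def)
  qed
qed

lemma morphism_in_carrier: "morphism X Y h \<Longrightarrow> x \<in> carrier X m \<Longrightarrow> h m x \<in> carrier Y m"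
  and morphism_act:
    "morphism X Y h \<Longrightarrow> f \<in> hom m n \<Longrightarrow> x \<in> carrier X m \<Longrightarrow> h n (act X m n f x) = act Y m n f (h m x)"
  and morphism_undefined: "morphism X Y h \<Longrightarrow> x \<notin> carrier X m \<Longrightarrow> h m x = undefined"
  unfolding morphism_def by blast+

lemma is_cset_cube: "is_cset (cube n)"
  unfolding is_cset_def by (simp add: bcomp_hom bcomp_bid_left bcomp_assoc)

lemma is_cset_cprod: "is_cset X \<Longrightarrow> is_cset Y \<Longrightarrow> is_cset (cprod X Y)"
  unfolding is_cset_def by (auto simp: mem_Times_iff)

lemma is_cset_obox: "is_cset (obox n e)"
  unfolding is_cset_def
  by (auto simp: obox_closed bcomp_assoc bcomp_bid_left[OF subsetD[OF obox_carrier_subset]])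

lemma is_cset_boxdom: "is_cset (boxdom k n e)"
  by (simp add: boxdom_def is_cset_cprod is_cset_cube is_cset_obox)

lemma morphism_mcomp: "is_cset X \<Longrightarrow> morphism X Y h \<Longrightarrow> morphism Y Z g \<Longrightarrow> morphism X Z (mcomp X g h)"
  unfolding morphism_def mcomp_def is_cset_def by auto

lemma morphism_mprod:
  "is_cset X1 \<Longrightarrow> is_cset X2 \<Longrightarrow> morphism X1 Y1 h1 \<Longrightarrow> morphism X2 Y2 h2 \<Longrightarrow>
   morphism (cprod X1 X2) (cprod Y1 Y2) (mprod X1 X2 h1 h2)"
  unfolding morphism_def mprod_def is_cset_def by (auto simp: mem_Times_iff)

lemma morphism_mid_cube: "morphism (cube k) (cube k) (mid (cube k))"
  unfolding morphism_def mid_def by (auto simp: bcomp_hom)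

lemma ymap_morphism: "g \<in> hom k m \<Longrightarrow> morphism (cube m) (cube k) (ymap m g)"
  unfolding morphism_def ymap_def by (auto simp: bcomp_hom bcomp_assoc)

lemma morphism_box_inclusion: "morphism (boxdom k n e) (cubedom k n) (mid (boxdom k n e))"
  unfolding morphism_def mid_def using obox_carrier_subset by (auto simp: bcomp_hom obox_closed)

lemma morphism_to_terminal: "morphism X terminal (to_terminal X)"
  unfolding morphism_def to_terminal_def terminal_def by auto

lemma to_terminal_compatible:
  "morphism (boxdom k n e) A b' \<Longrightarrow>
   mcomp (boxdom k n e) (to_terminal A) b' = mcomp (boxdom k n e) (to_terminal (cubedom k n)) (mid (boxdom k n e))"
  using obox_carrier_subset
  by (intro ext) (auto simp: mcomp_def mid_def to_terminal_def morphism_in_carrier)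

text \<open>Precomposition with \<open>y(g) \<times> 1 : I\<^sup>m \<times> Z \<rightarrow> I\<^sup>k \<times> Z\<close>, where \<open>g \<in> hom k m\<close>.\<close>
definition reindex :: "nat \<Rightarrow> (nat \<Rightarrow> pt) \<Rightarrow> 'c cset
    \<Rightarrow> (nat \<Rightarrow> (nat \<Rightarrow> pt) \<times> 'c \<Rightarrow> 'x) \<Rightarrow> (nat \<Rightarrow> (nat \<Rightarrow> pt) \<times> 'c \<Rightarrow> 'x)" where
  "reindex m g Z h = mcomp (cprod (cube m) Z) h (mprod (cube m) Z (ymap m g) (mid Z))"

lemma reindex_apply:
  "reindex m g Z h p (w, z) = (if w \<in> hom m p \<and> z \<in> carrier Z p then h p (bcomp w g, z) else undefined)"
  by (simp add: reindex_def mcomp_def mprod_def mid_def ymap_def)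

lemma reindex_to_terminal:
  "g \<in> hom k m \<Longrightarrow> reindex m g (cube n) (to_terminal (cubedom k n)) = to_terminal (cubedom m n)"
  by (intro ext) (auto simp: reindex_apply to_terminal_def bcomp_hom)

lemma ukf_structureD:
  assumes \<phi>: "ukf_structure X Y f \<phi>" and "1 \<le> n" "1 \<le> k"
    and "morphism (cubedom k n) X a" "morphism (boxdom k n e) Y b'"
    and "mcomp (boxdom k n e) f b' = mcomp (boxdom k n e) a (mid (boxdom k n e))"
  shows ukf_filler_morphism: "morphism (cubedom k n) Y (\<phi> n e k a b')"
    and ukf_filler_extends: "x \<in> carrier (boxdom k n e) m \<Longrightarrow> \<phi> n e k a b' m x = b' m x"
    and ukf_filler_over: "x \<in> carrier (cubedom k n) m \<Longrightarrow> f m (\<phi> n e k a b' m x) = a m x"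
    and ukf_filler_reindex: "1 \<le> m \<Longrightarrow> g \<in> hom k m \<Longrightarrow>
      \<phi> n e m (reindex m g (cube n) a) (reindex m g (obox n e) b') = reindex m g (cube n) (\<phi> n e k a b')"
proof -
  note filler = \<phi>[unfolded ukf_structure_def, rule_format, OF assms(2-6)]
  show "morphism (cubedom k n) Y (\<phi> n e k a b')"
    using filler by blast
  show "\<phi> n e k a b' m x = b' m x" if "x \<in> carrier (boxdom k n e) m"
    using fun_cong[OF fun_cong[OF conjunct1[OF conjunct2[OF filler]], of m], of x] that
    by (simp add: mcomp_def mid_def)
  show "f m (\<phi> n e k a b' m x) = a m x" if "x \<in> carrier (cubedom k n) m"
    using fun_cong[OF fun_cong[OF conjunct1[OF conjunct2[OF conjunct2[OF filler]]], of m], of x] that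
    by (simp add: mcomp_def)
  show "\<phi> n e m (reindex m g (cube n) a) (reindex m g (obox n e) b') = reindex m g (cube n) (\<phi> n e k a b')"
    if "1 \<le> m" "g \<in> hom k m"
    using filler that ymap_morphism[OF that(2)] by (simp add: reindex_def cubedom_def boxdom_def)
qed

section \<open>The path object\<close>

lemma carrier_expI [simp]: "carrier (expI A) n = {\<phi>. morphism (cprod (cube n) (cube 1)) A \<phi>}"
  by (simp add: expI_def)

lemma act_expI:
  "act (expI A) n m g \<phi> =
     (\<lambda>p yt. if yt \<in> hom m p \<times> hom 1 p then \<phi> p (bcomp (fst yt) g, snd yt) else undefined)"
  by (intro ext) (auto simp: expI_def mcomp_def mprod_def mid_def ymap_def)

lemma act_expI_apply:
  "y \<in> hom m p \<Longrightarrow> t \<in> hom 1 p \<Longrightarrow> act (expI A) n m g \<phi> p (y, t) = \<phi> p (bcomp y g, t)"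
  by (simp add: act_expI)

lemma act_expI_comp:
  assumes "g \<in> hom n m"
  shows "act (expI A) n m g (act (expI A) k n f \<delta>) = act (expI A) k m (bcomp g f) \<delta>"
  using assms by (intro ext) (auto simp: act_expI bcomp_hom bcomp_assoc)

lemma act_expI_bid: "\<delta> \<in> carrier (expI A) n \<Longrightarrow> act (expI A) n n (bid n) \<delta> = \<delta>"
  by (intro ext) (auto simp: act_expI bcomp_bid_right morphism_undefined)

lemma act_expI_in_carrier:
  assumes g: "g \<in> hom k m" and \<delta>: "\<delta> \<in> carrier (expI A) k"
  shows "act (expI A) k m g \<delta> \<in> carrier (expI A) m"
proof -
  have \<delta>: "morphism (cprod (cube k) (cube 1)) A \<delta>"
    using \<delta> by simp
  have "act (expI A) k m g \<delta> = mcomp (cprod (cube m) (cube 1)) \<delta> (mprod (cube m) (cube 1) (ymap m g) (mid (cube 1)))"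
    by (simp add: expI_def)
  then show ?thesis
    using morphism_mcomp[OF is_cset_cprod[OF is_cset_cube is_cset_cube]
        morphism_mprod[OF is_cset_cube is_cset_cube ymap_morphism[OF g] morphism_mid_cube] \<delta>] by simp
qed

text \<open>The exponential transpose \<open>I\<^sup>k \<times> I \<rightarrow> A\<^sup>I\<close> of a map \<open>F : I\<^sup>k \<times> I\<^sup>2 \<rightarrow> A\<close>;
  the path coordinate is the first coordinate of \<open>I\<^sup>2\<close>.\<close>
definition path_transpose ::
    "nat \<Rightarrow> (nat \<Rightarrow> (nat \<Rightarrow> pt) \<times> (nat \<Rightarrow> pt) \<Rightarrow> 'a) \<Rightarrow> nat \<Rightarrow> (nat \<Rightarrow> pt) \<times> (nat \<Rightarrow> pt) \<Rightarrow> 'a path" where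
  "path_transpose k F = (\<lambda>m xs. if xs \<in> hom k m \<times> hom 1 m then
     (\<lambda>p yt. if yt \<in> hom m p \<times> hom 1 p
       then F p (bcomp (fst yt) (fst xs), cube_pair (snd yt) (bcomp (fst yt) (snd xs)))
       else undefined)
     else undefined)"

lemma path_transpose_apply:
  "x \<in> hom k m \<Longrightarrow> s \<in> hom 1 m \<Longrightarrow> y \<in> hom m p \<Longrightarrow> t \<in> hom 1 p \<Longrightarrow>
   path_transpose k F m (x, s) p (y, t) = F p (bcomp y x, cube_pair t (bcomp y s))"
  by (simp add: path_transpose_def)

lemma path_transpose_in_expI:
  assumes F: "morphism (cubedom k 2) A F" and x: "x \<in> hom k m" and s: "s \<in> hom 1 m"
  shows "path_transpose k F m (x, s) \<in> carrier (expI A) m"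
  unfolding carrier_expI mem_Collect_eq morphism_def
proof (intro conjI allI impI)
  fix p yt assume "yt \<in> carrier (cprod (cube m) (cube 1)) p"
  then show "path_transpose k F m (x, s) p yt \<in> carrier A p"
    using x s by (auto simp: path_transpose_apply bcomp_hom cube_pair_hom morphism_in_carrier[OF F])
next
  fix p q f yt assume f: "f \<in> hom p q" and "yt \<in> carrier (cprod (cube m) (cube 1)) p"
  then obtain y t where yt: "yt = (y, t)" and y: "y \<in> hom m p" and t: "t \<in> hom 1 p"
    by auto
  have "(bcomp y x, cube_pair t (bcomp y s)) \<in> carrier (cubedom k 2) p"
    using x y s t by (simp add: bcomp_hom cube_pair_hom)
  from morphism_act[OF F f this] show
    "path_transpose k F m (x, s) q (act (cprod (cube m) (cube 1)) p q f yt)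
     = act A p q f (path_transpose k F m (x, s) p yt)"
    using x s y t f by (simp add: yt path_transpose_apply bcomp_hom bcomp_cube_pair bcomp_assoc)
next
  fix p yt assume "yt \<notin> carrier (cprod (cube m) (cube 1)) p"
  then show "path_transpose k F m (x, s) p yt = undefined"
    using x s by (simp add: path_transpose_def)
qed

lemma morphism_path_transpose:
  assumes F: "morphism (cubedom k 2) A F"
  shows "morphism (cubedom k 1) (expI A) (path_transpose k F)"
  unfolding morphism_def
proof (intro conjI allI impI)
  fix m xs assume "xs \<in> carrier (cubedom k 1) m"
  then show "path_transpose k F m xs \<in> carrier (expI A) m"
    using path_transpose_in_expI[OF F] by (cases xs) simp
next
  fix m n f xs assume f: "f \<in> hom m n" and "xs \<in> carrier (cubedom k 1) m"
  then obtain x s where xs: "xs = (x, s)" and x: "x \<in> hom k m" and s: "s \<in> hom 1 m"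
    by auto
  show "path_transpose k F n (act (cubedom k 1) m n f xs) = act (expI A) m n f (path_transpose k F m xs)"
    using f x s by (intro ext) (auto simp: xs path_transpose_def act_expI bcomp_hom bcomp_assoc)
next
  fix m xs assume "xs \<notin> carrier (cubedom k 1) m"
  then show "path_transpose k F m xs = undefined"
    by (simp add: path_transpose_def)
qed

lemma reindex_path_transpose:
  assumes g: "g \<in> hom k m"
  shows "reindex m g (cube 1) (path_transpose k F) = path_transpose m (reindex m g (cube 2) F)"
proof (intro ext)
  fix p xs q yt
  show "reindex m g (cube 1) (path_transpose k F) p xs q yt = path_transpose m (reindex m g (cube 2) F) p xs q yt"
    using g by (cases xs; cases yt) (auto simp: reindex_apply path_transpose_def bcomp_hom cube_pair_hom bcomp_assoc)
qed

section \<open>Contracting a path to its start point\<close>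

text \<open>In coordinates \<open>(t, s)\<close> of \<open>I\<^sup>2\<close> (\<open>t = h 0\<close>, \<open>s = h 1\<close>), the box \<open>\<sqcup>\<^sup>2\<^sub>1\<close> consists of the faces
  \<open>t = 0\<close>, \<open>s = 0\<close> and \<open>s = 1\<close>; this map sends the face \<open>s = 1\<close> identically onto \<open>I\<close>
  and collapses the other two faces to the endpoint \<open>0\<close>.\<close>
definition box_retraction :: "nat \<Rightarrow> (nat \<Rightarrow> pt) \<Rightarrow> (nat \<Rightarrow> pt)" where
  "box_retraction m h =
     (if h \<in> obox_carrier 2 True m then if h 1 = Top then cube_fst h else end0 else undefined)"

lemma box_retraction_hom: "h \<in> obox_carrier 2 True m \<Longrightarrow> box_retraction m h \<in> hom 1 m"
  by (auto simp: box_retraction_def obox_carrier_2 cube_fst_hom)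

lemma morphism_box_retraction: "morphism (obox 2 True) (cube 1) box_retraction"
  unfolding morphism_def
proof (intro conjI allI impI)
  fix m h assume "h \<in> carrier (obox 2 True) m"
  then show "box_retraction m h \<in> carrier (cube 1) m"
    by (simp add: box_retraction_hom)
next
  fix m n f h assume f: "f \<in> hom m n" and h: "h \<in> carrier (obox 2 True) m"
  then have fh: "bcomp f h \<in> obox_carrier 2 True n"
    by (simp add: obox_closed)
  have apply_fh: "bcomp f h i = ext f (h i)" for i
    by (simp add: bcomp_def)
  consider "h 1 = Top" | "h 1 \<noteq> Top" "ext f (h 1) = Top" | "ext f (h 1) \<noteq> Top"
    by fastforce
  then show "box_retraction n (act (obox 2 True) m n f h) = act (cube 1) m n f (box_retraction m h)"
  proof cases
    case 1
    then show ?thesis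
      using h fh by (simp add: box_retraction_def apply_fh bcomp_cube_fst)
  next
    case 2
    then have "h 0 = Bot"
      using h by (cases "h 1") (auto simp: obox_carrier_2)
    then show ?thesis
      using 2 h fh by (simp add: box_retraction_def apply_fh cube_fst_eq_end0)
  next
    case 3
    then show ?thesis
      using h fh by (auto simp: box_retraction_def apply_fh)
  qed
next
  fix m h assume "h \<notin> carrier (obox 2 True) m"
  then show "box_retraction m h = undefined"
    by (simp add: box_retraction_def)
qed

definition contract_box :: "nat \<Rightarrow> 'a path \<Rightarrow> nat \<Rightarrow> (nat \<Rightarrow> pt) \<times> (nat \<Rightarrow> pt) \<Rightarrow> 'a" where
  "contract_box k \<gamma> = mcomp (boxdom k 2 True) \<gamma> (mprod (cube k) (obox 2 True) (mid (cube k)) box_retraction)"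

lemma contract_box_apply:
  "x \<in> hom k m \<Longrightarrow> h \<in> obox_carrier 2 True m \<Longrightarrow> contract_box k \<gamma> m (x, h) = \<gamma> m (x, box_retraction m h)"
  by (simp add: contract_box_def mcomp_def mprod_def mid_def)

lemma morphism_contract_box:
  assumes "\<gamma> \<in> carrier (expI A) k"
  shows "morphism (boxdom k 2 True) A (contract_box k \<gamma>)"
  unfolding contract_box_def
  using morphism_mcomp[OF is_cset_boxdom, unfolded boxdom_def,
      OF morphism_mprod[OF is_cset_cube is_cset_obox morphism_mid_cube morphism_box_retraction]] assms
  by (simp add: boxdom_def)

lemma reindex_contract_box:
  assumes g: "g \<in> hom k m"
  shows "reindex m g (obox 2 True) (contract_box k \<gamma>) = contract_box m (act (expI A) k m g \<gamma>)"
proof (intro ext)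
  fix p xs
  show "reindex m g (obox 2 True) (contract_box k \<gamma>) p xs = contract_box m (act (expI A) k m g \<gamma>) p xs"
    using g by (cases xs) (auto simp: reindex_apply contract_box_def mcomp_def mprod_def mid_def
        act_expI_apply bcomp_hom box_retraction_hom)
qed

locale kan_complex_fillers =
  fixes A :: "'a cset" and fillA
  assumes fillA: "ukf_structure terminal A (to_terminal A) fillA"
begin

definition fill :: "nat \<Rightarrow> bool \<Rightarrow> nat \<Rightarrow> (nat \<Rightarrow> (nat \<Rightarrow> pt) \<times> (nat \<Rightarrow> pt) \<Rightarrow> 'a)
    \<Rightarrow> nat \<Rightarrow> (nat \<Rightarrow> pt) \<times> (nat \<Rightarrow> pt) \<Rightarrow> 'a" where
  "fill n e k b' = fillA n e k (to_terminal (cubedom k n)) b'"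

context
  fixes n k e b'
  assumes n: "1 \<le> n" and k: "1 \<le> k" and b': "morphism (boxdom k n e) A b'"
begin

lemma morphism_fill: "morphism (cubedom k n) A (fill n e k b')"
  unfolding fill_def
  by (rule ukf_filler_morphism[OF fillA n k morphism_to_terminal b' to_terminal_compatible[OF b']])

lemma fill_extends: "x \<in> carrier (boxdom k n e) m \<Longrightarrow> fill n e k b' m x = b' m x"
  unfolding fill_def
  by (rule ukf_filler_extends[OF fillA n k morphism_to_terminal b' to_terminal_compatible[OF b']])

lemma fill_reindex:
  "1 \<le> m \<Longrightarrow> g \<in> hom k m \<Longrightarrow> fill n e m (reindex m g (obox n e) b') = reindex m g (cube n) (fill n e k b')"
  using ukf_filler_reindex[OF fillA n k morphism_to_terminal b' to_terminal_compatible[OF b']]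
  by (simp add: fill_def reindex_to_terminal)

end

definition contract_square :: "nat \<Rightarrow> 'a path \<Rightarrow> nat \<Rightarrow> (nat \<Rightarrow> pt) \<times> (nat \<Rightarrow> pt) \<Rightarrow> 'a" where
  "contract_square k \<gamma> = fill 2 True k (contract_box k \<gamma>)"

context
  fixes k \<gamma>
  assumes \<gamma>: "\<gamma> \<in> carrier (expI A) k" and k: "1 \<le> k"
begin

lemma morphism_contract_square: "morphism (cubedom k 2) A (contract_square k \<gamma>)"
  unfolding contract_square_def using k morphism_contract_box[OF \<gamma>] by (simp add: morphism_fill)

lemma contract_square_end1:
  assumes "x \<in> hom k p" "t \<in> hom 1 p"
  shows "contract_square k \<gamma> p (x, cube_pair t end1) = \<gamma> p (x, t)"
proof -
  have top: "cube_pair t end1 1 = Top"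
    by (simp add: cube_pair_def end1_def)
  then have "cube_pair t end1 \<in> obox_carrier 2 True p"
    using cube_pair_hom[OF assms(2) end1_hom] by (simp add: obox_carrier_2)
  with top show ?thesis
    using assms k morphism_contract_box[OF \<gamma>]
    by (simp add: contract_square_def fill_extends contract_box_apply box_retraction_def cube_fst_cube_pair)
qed

lemma contract_square_end0:
  assumes "x \<in> hom k p" "t \<in> hom 1 p"
  shows "contract_square k \<gamma> p (x, cube_pair t end0) = \<gamma> p (x, end0)"
proof -
  have bottom: "cube_pair t end0 1 = Bot"
    by (simp add: cube_pair_def end0_def)
  then have "cube_pair t end0 \<in> obox_carrier 2 True p"
    using cube_pair_hom[OF assms(2) end0_hom] by (simp add: obox_carrier_2)
  with bottom show ?thesis
    using assms k morphism_contract_box[OF \<gamma>]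
    by (simp add: contract_square_def fill_extends contract_box_apply box_retraction_def)
qed

lemma contract_square_reindex:
  "1 \<le> m \<Longrightarrow> g \<in> hom k m \<Longrightarrow>
   contract_square m (act (expI A) k m g \<gamma>) = reindex m g (cube 2) (contract_square k \<gamma>)"
  using k morphism_contract_box[OF \<gamma>]
  by (simp add: contract_square_def fill_reindex reindex_contract_box[symmetric])

end

end

section \<open>Lifting the contraction along \<open>\<pi>\<close>\<close>

locale path_lifting = kan_complex_fillers A fillA
  for A :: "'a cset" and fillA +
  fixes B :: "'b cset" and \<pi> :: "nat \<Rightarrow> 'b \<Rightarrow> 'a path" and b :: "nat \<Rightarrow> 'a \<Rightarrow> 'b" and fillB
  assumes fillB: "ukf_structure (expI A) B \<pi> fillB"
    and b: "morphism A B b"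
    and \<pi>_b: "mcomp A \<pi> b = constpath A"
begin

definition contraction_path :: "nat \<Rightarrow> 'a path \<Rightarrow> nat \<Rightarrow> (nat \<Rightarrow> pt) \<times> (nat \<Rightarrow> pt) \<Rightarrow> 'a path" where
  "contraction_path k \<gamma> = path_transpose k (contract_square k \<gamma>)"

definition start_lift :: "nat \<Rightarrow> 'a path \<Rightarrow> nat \<Rightarrow> (nat \<Rightarrow> pt) \<times> (nat \<Rightarrow> pt) \<Rightarrow> 'b" where
  "start_lift k \<gamma> = mcomp (boxdom k 1 True) b (mcomp (boxdom k 1 True) \<gamma> (mid (boxdom k 1 True)))"

definition path_lift :: "nat \<Rightarrow> 'a path \<Rightarrow> nat \<Rightarrow> (nat \<Rightarrow> pt) \<times> (nat \<Rightarrow> pt) \<Rightarrow> 'b" where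
  "path_lift k \<gamma> = fillB 1 True k (contraction_path k \<gamma>) (start_lift k \<gamma>)"

lemma start_lift_apply:
  "x \<in> hom k m \<Longrightarrow> start_lift k \<gamma> m (x, end0) = b m (\<gamma> m (x, end0))"
  by (simp add: start_lift_def mcomp_def mid_def obox_carrier_1)

lemma reindex_start_lift:
  assumes g: "g \<in> hom k m"
  shows "reindex m g (obox 1 True) (start_lift k \<gamma>) = start_lift m (act (expI A) k m g \<gamma>)"
proof (intro ext)
  fix p xs
  show "reindex m g (obox 1 True) (start_lift k \<gamma>) p xs = start_lift m (act (expI A) k m g \<gamma>) p xs"
    using g by (cases xs) (auto simp: reindex_apply obox_carrier_1 start_lift_apply act_expI_apply
        bcomp_hom start_lift_def mcomp_def mid_def)
qed

context
  fixes k \<gamma>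
  assumes \<gamma>: "\<gamma> \<in> carrier (expI A) k" and k: "1 \<le> k"
begin

lemma morphism_start_lift: "morphism (boxdom k 1 True) B (start_lift k \<gamma>)"
  unfolding start_lift_def
  using \<gamma> morphism_mcomp[OF is_cset_boxdom morphism_mcomp[OF is_cset_boxdom morphism_box_inclusion] b]
  by (simp add: cubedom_def)

lemma start_lift_compatible:
  "mcomp (boxdom k 1 True) \<pi> (start_lift k \<gamma>)
   = mcomp (boxdom k 1 True) (contraction_path k \<gamma>) (mid (boxdom k 1 True))"
proof (intro ext)
  fix m xs p yt
  have \<gamma>_morphism: "morphism (cprod (cube k) (cube 1)) A \<gamma>"
    using \<gamma> by simp
  have "constpath A m (\<gamma> m (x, end0)) p (y, t) = contraction_path k \<gamma> m (x, end0) p (y, t)"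
    if "x \<in> hom k m" for x y t
    using that morphism_act[OF \<gamma>_morphism, of y m p "(x, end0)"]
    by (cases "y \<in> hom m p \<and> t \<in> hom 1 p")
      (auto simp: constpath_def contraction_path_def path_transpose_def contract_square_end0[OF \<gamma> k]
        bcomp_hom morphism_in_carrier[OF \<gamma>_morphism])
  moreover have "\<pi> m (b m (\<gamma> m (x, end0))) = constpath A m (\<gamma> m (x, end0))" if "x \<in> hom k m" for x
    using fun_cong[OF fun_cong[OF \<pi>_b, of m], of "\<gamma> m (x, end0)"] that
    by (simp add: mcomp_def morphism_in_carrier[OF \<gamma>_morphism])
  ultimately show "mcomp (boxdom k 1 True) \<pi> (start_lift k \<gamma>) m xs p yt
    = mcomp (boxdom k 1 True) (contraction_path k \<gamma>) (mid (boxdom k 1 True)) m xs p yt"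
    by (cases xs; cases yt) (auto simp: mcomp_def mid_def obox_carrier_1 start_lift_apply)
qed

lemma morphism_contraction_path: "morphism (cubedom k 1) (expI A) (contraction_path k \<gamma>)"
  unfolding contraction_path_def by (rule morphism_path_transpose[OF morphism_contract_square[OF \<gamma> k]])

lemma morphism_path_lift: "morphism (cubedom k 1) B (path_lift k \<gamma>)"
  unfolding path_lift_def
  by (rule ukf_filler_morphism[OF fillB order_refl k morphism_contraction_path morphism_start_lift
        start_lift_compatible])

lemma path_lift_end1: "x \<in> hom k m \<Longrightarrow> \<pi> m (path_lift k \<gamma> m (x, end1)) = act (expI A) k m x \<gamma>"
  using ukf_filler_over[OF fillB order_refl k morphism_contraction_path morphism_start_lift
      start_lift_compatible, of "(x, end1)" m]
  by (intro ext) (auto simp: path_lift_def contraction_path_def path_transpose_def act_expI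
      contract_square_end1[OF \<gamma> k] bcomp_hom)

lemma path_lift_reindex:
  assumes m: "1 \<le> m" and g: "g \<in> hom k m"
  shows "path_lift m (act (expI A) k m g \<gamma>) = reindex m g (cube 1) (path_lift k \<gamma>)"
  using ukf_filler_reindex[OF fillB order_refl k morphism_contraction_path morphism_start_lift
      start_lift_compatible m g]
  by (simp add: path_lift_def contraction_path_def reindex_path_transpose[OF g]
      contract_square_reindex[OF \<gamma> k m g] reindex_start_lift[OF g])

end

text \<open>Uniformity is only available over cubes \<open>I\<^sup>k\<close> with \<open>k \<ge> 1\<close>, so \<open>\<delta> \<in> (A\<^sup>I)(n)\<close> is first
  pulled back along the projection \<open>I\<^sup>n\<^sup>+\<^sup>1 \<rightarrow> I\<^sup>n\<close> (\<open>bid n \<in> hom n (Suc n)\<close>) and the lift is then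
  evaluated on the face \<open>I\<^sup>n \<rightarrow> I\<^sup>n\<^sup>+\<^sup>1\<close> (\<open>bid n \<in> hom (Suc n) n\<close>).\<close>
definition lift_section :: "nat \<Rightarrow> 'a path \<Rightarrow> 'b" where
  "lift_section n \<delta> = (if \<delta> \<in> carrier (expI A) n
     then path_lift (Suc n) (act (expI A) n (Suc n) (bid n) \<delta>) n (bid n, end1) else undefined)"

lemma pullback_in_carrier:
  "\<delta> \<in> carrier (expI A) n \<Longrightarrow> act (expI A) n (Suc n) (bid n) \<delta> \<in> carrier (expI A) (Suc n)"
  by (rule act_expI_in_carrier[OF bid_hom_le]) simp_all

lemma lift_section_over:
  assumes \<delta>: "\<delta> \<in> carrier (expI A) n"
  shows "\<pi> n (lift_section n \<delta>) = \<delta>"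
proof -
  have "\<pi> n (lift_section n \<delta>) = act (expI A) (Suc n) n (bid n) (act (expI A) n (Suc n) (bid n) \<delta>)"
    using \<delta> path_lift_end1[OF pullback_in_carrier[OF \<delta>] _ bid_hom_Suc] by (simp add: lift_section_def)
  also have "\<dots> = act (expI A) n n (bid n) \<delta>"
    by (simp add: act_expI_comp bid_hom_Suc bcomp_bid_right[OF bid_hom_le[of n n]])
  also have "\<dots> = \<delta>"
    using \<delta> by (rule act_expI_bid)
  finally show ?thesis .
qed

lemma lift_section_natural:
  assumes g: "g \<in> hom n m" and \<delta>: "\<delta> \<in> carrier (expI A) n"
  shows "lift_section m (act (expI A) n m g \<delta>) = act B n m g (lift_section n \<delta>)"
proof -
  define \<delta>' where "\<delta>' = act (expI A) n (Suc n) (bid n) \<delta>"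
  have \<delta>': "\<delta>' \<in> carrier (expI A) (Suc n)"
    unfolding \<delta>'_def using \<delta> by (rule pullback_in_carrier)
  have g': "hom_extend n m g \<in> hom (Suc n) (Suc m)"
    using g by (rule hom_extend_hom)
  have "act (expI A) m (Suc m) (bid m) (act (expI A) n m g \<delta>)
      = act (expI A) (Suc n) (Suc m) (hom_extend n m g) \<delta>'"
    using g g' by (simp add: \<delta>'_def act_expI_comp bid_hom_le bcomp_bid_left bcomp_hom_extend_bid)
  then have "lift_section m (act (expI A) n m g \<delta>)
      = path_lift (Suc m) (act (expI A) (Suc n) (Suc m) (hom_extend n m g) \<delta>') m (bid m, end1)"
    using act_expI_in_carrier[OF g \<delta>] by (simp add: lift_section_def)
  also have "\<dots> = path_lift (Suc n) \<delta>' m (g, end1)"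
    using g by (simp add: path_lift_reindex[OF \<delta>' _ _ g'] reindex_apply bid_hom_Suc bcomp_bid_hom_extend)
  also have "\<dots> = act B n m g (path_lift (Suc n) \<delta>' n (bid n, end1))"
    using morphism_act[OF morphism_path_lift[OF \<delta>'] g, of "(bid n, end1)"] g
    by (simp add: bid_hom_Suc bcomp_bid_right)
  also have "\<dots> = act B n m g (lift_section n \<delta>)"
    using \<delta> by (simp add: lift_section_def \<delta>'_def)
  finally show ?thesis .
qed

lemma morphism_lift_section: "morphism (expI A) B lift_section"
  unfolding morphism_def
proof (intro conjI allI impI)
  fix m \<delta> assume "\<delta> \<in> carrier (expI A) m"
  then show "lift_section m \<delta> \<in> carrier B m"
    using morphism_in_carrier[OF morphism_path_lift[OF pullback_in_carrier], of \<delta> m "(bid m, end1)" m]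
    by (simp add: lift_section_def bid_hom_Suc)
next
  fix m n f \<delta> assume "f \<in> hom m n" "\<delta> \<in> carrier (expI A) m"
  then show "lift_section n (act (expI A) m n f \<delta>) = act B m n f (lift_section m \<delta>)"
    by (rule lift_section_natural)
next
  fix m \<delta> assume "\<delta> \<notin> carrier (expI A) m"
  then show "lift_section m \<delta> = undefined"
    by (simp add: lift_section_def)
qed

end

theorem proposition3p6:
  fixes A :: "'a cset" and B :: "'b cset"
    and \<pi> :: "nat \<Rightarrow> 'b \<Rightarrow> 'a path" and b :: "nat \<Rightarrow> 'a \<Rightarrow> 'b"
  assumes "is_cset A" and "is_cset B"
    and "uniform_kan_complex A"
    and "uniform_kan_fibration (expI A) B \<pi>"
    and "morphism A B b"
    and "mcomp A \<pi> b = constpath A"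
  shows "\<exists>j. morphism (expI A) B j \<and> mcomp (expI A) \<pi> j = mid (expI A)"
proof -
  obtain fillA where "ukf_structure terminal A (to_terminal A) fillA"
    using assms(3) unfolding uniform_kan_complex_def uniform_kan_fibration_def by blast
  moreover obtain fillB where "ukf_structure (expI A) B \<pi> fillB"
    using assms(4) unfolding uniform_kan_fibration_def by blast
  ultimately interpret path_lifting A fillA B \<pi> b fillB
    using assms(5,6) by unfold_locales
  have "mcomp (expI A) \<pi> lift_section = mid (expI A)"
    by (intro ext) (simp add: mcomp_def mid_def lift_section_over)
  with morphism_lift_section show ?thesis
    by blast
qed

end
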